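(* For every $n\ge 9$, the graph $G_n$ is not an IP-SEG graph.
   Context: Let $L_1$ and $L_2$ be two distinct parallel horizontal lines in the plane. A closed straight line segment is an interval segment if both of its endpoints lie on the same line $L_i$, and a permutation segment if one endpoint lies on $L_1$ and the other on $L_2$. An IP-SEG model is a finite family of interval and permutation segments; its intersection graph has one vertex per segment, adjacent iff the segments intersect. A graph is an IP-SEG graph if it is isomorphic to the intersection graph of an IP-SEG model. For $n\ge 3$, $G_n$ is the graph on $3n$ vertices $v_1,\dots,v_n,w_1,\dots,w_n,z_1,\dots,z_n$ whose edges are $v_iv_{i+1}$ (indices mod $n$), $v_iw_i$ and $w_iz_i$ for $1\le i\le n$, and no others. *)

theory Defs
  imports "HOL-Analysis.Analysis"
begin

type_synonym pt = "real \<times> real"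
type_synonym seg = "pt \<times> pt"

text \<open>The two lines are L1 = {y = c1} and L2 = {y = c2}, with c1 distinct from c2.
  A segment is given by its two endpoints; its point set is the closed segment between them.\<close>

definition seg_set :: "seg \<Rightarrow> pt set" where
  "seg_set s = closed_segment (fst s) (snd s)"

definition interval_seg :: "real \<Rightarrow> real \<Rightarrow> seg \<Rightarrow> bool" where
  "interval_seg c1 c2 s \<longleftrightarrow> fst s \<noteq> snd s \<and>
     ((snd (fst s) = c1 \<and> snd (snd s) = c1) \<or> (snd (fst s) = c2 \<and> snd (snd s) = c2))"

definition perm_seg :: "real \<Rightarrow> real \<Rightarrow> seg \<Rightarrow> bool" where
  "perm_seg c1 c2 s \<longleftrightarrow>
     ((snd (fst s) = c1 \<and> snd (snd s) = c2) \<or> (snd (fst s) = c2 \<and> snd (snd s) = c1))"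

definition IP_SEG_graph :: "real \<Rightarrow> real \<Rightarrow> 'v set \<Rightarrow> ('v \<Rightarrow> 'v \<Rightarrow> bool) \<Rightarrow> bool" where
  "IP_SEG_graph c1 c2 V E \<longleftrightarrow>
     (\<exists>s :: 'v \<Rightarrow> seg.
        (\<forall>v\<in>V. interval_seg c1 c2 (s v) \<or> perm_seg c1 c2 (s v)) \<and>
        (\<forall>u\<in>V. \<forall>v\<in>V. u \<noteq> v \<longrightarrow> (E u v \<longleftrightarrow> seg_set (s u) \<inter> seg_set (s v) \<noteq> {})))"

datatype gvert = Vv nat | Wv nat | Zv nat

text \<open>G_n with indices 0..n-1 (v_i = Vv i, w_i = Wv i, z_i = Zv i).\<close>

definition Gn_verts :: "nat \<Rightarrow> gvert set" where
  "Gn_verts n = Vv ` {..<n} \<union> Wv ` {..<n} \<union> Zv ` {..<n}"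

definition Gn_adj :: "nat \<Rightarrow> gvert \<Rightarrow> gvert \<Rightarrow> bool" where
  "Gn_adj n x y \<longleftrightarrow> (\<exists>i<n.
      {x, y} = {Vv i, Vv ((i + 1) mod n)} \<or> {x, y} = {Vv i, Wv i} \<or> {x, y} = {Wv i, Zv i})"

end

theory Submission
  imports Defs
begin

text \<open>Call {v_i, w_i, z_i} the i-th block of G_n. A permutation segment splits the strip between
  the two lines, and the segments of all blocks at cyclic distance at least 2 from its own block
  form a connected set avoiding it, so they all lie on one side of it. Hence no three pairwise far
  blocks contain permutation segments: the one whose foot on the first line lies in the middle
  would see the other two on opposite sides. On the other hand, among any three consecutive
  blocks one contains a permutation segment, for otherwise the interval segments of
  v_i, ..., v_{i+4}, w_{i+2}, z_{i+2} lie on one line and their traces there form an interval model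
  with the asteroidal triple v_i, v_{i+4}, z_{i+2}. For n \<ge> 9 the two facts clash.\<close>

lemma connected_sign_const:
  fixes f :: "'a::topological_space \<Rightarrow> real"
  assumes "connected S" "continuous_on S f" "\<forall>x\<in>S. f x \<noteq> 0" "x \<in> S" "y \<in> S"
  shows "0 < f x \<longleftrightarrow> 0 < f y"
proof -
  have "connected (f ` S)"
    by (rule connected_continuous_image[OF assms(2,1)])
  then have "0 \<in> f ` S" if "f x \<le> 0 \<and> 0 \<le> f y \<or> f y \<le> 0 \<and> 0 \<le> f x"
    using that assms(4,5) unfolding connected_iff_interval by blast
  then show ?thesis
    using assms(3) by force
qed

lemma connected_UN_consecutive:
  assumes "\<And>k. k \<le> N \<Longrightarrow> connected (A k)" "\<And>k. k < N \<Longrightarrow> A k \<inter> A (Suc k) \<noteq> {}"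
  shows "connected (\<Union>k\<le>N. A k)"
  using assms
proof (induction N)
  case 0
  then show ?case by simp
next
  case (Suc N)
  have "(\<Union>k\<le>Suc N. A k) = (\<Union>k\<le>N. A k) \<union> A (Suc N)"
    by (simp add: atMost_Suc Un_commute)
  moreover have "(\<Union>k\<le>N. A k) \<inter> A (Suc N) \<noteq> {}"
    using Suc.prems(2)[of N] by blast
  ultimately show ?case
    using Suc by (simp add: connected_Un)
qed

lemma real_connected_no_asteroidal_triple:
  fixes a e z :: real
  assumes "connected U" "a \<in> U" "e \<in> U" "z \<notin> U"
    and "connected V" "e \<in> V" "z \<in> V" "a \<notin> V"
    and "connected W" "a \<in> W" "z \<in> W" "e \<notin> W"
  shows False
  using assms unfolding connected_iff_interval by (meson linear)

lemma connected_seg_set: "connected (seg_set \<sigma>)"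
  by (simp add: seg_set_def)

definition strip :: "real \<Rightarrow> real \<Rightarrow> pt set" where
  "strip c1 c2 = snd -` closed_segment c1 c2"

lemma seg_set_subset_snd_vimage:
  assumes "convex T" "snd (fst \<sigma>) \<in> T" "snd (snd \<sigma>) \<in> T"
  shows "seg_set \<sigma> \<subseteq> snd -` T"
  unfolding seg_set_def
  using assms by (intro closed_segment_subset convex_linear_vimage bounded_linear.linear[OF bounded_linear_snd]) auto

lemma seg_set_subset_strip:
  assumes "interval_seg c1 c2 \<sigma> \<or> perm_seg c1 c2 \<sigma>"
  shows "seg_set \<sigma> \<subseteq> strip c1 c2"
  unfolding strip_def using assms
  by (intro seg_set_subset_snd_vimage) (auto simp: interval_seg_def perm_seg_def)

definition horizontal :: "real \<Rightarrow> seg \<Rightarrow> bool" where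
  "horizontal c \<sigma> \<longleftrightarrow> snd (fst \<sigma>) = c \<and> snd (snd \<sigma>) = c"

lemma horizontal_snd:
  assumes "horizontal c \<sigma>" "m \<in> seg_set \<sigma>"
  shows "snd m = c"
  using seg_set_subset_snd_vimage[of "{c}" \<sigma>] assms unfolding horizontal_def by auto

lemma interval_seg_horizontal: "interval_seg c1 c2 \<sigma> \<Longrightarrow> horizontal c1 \<sigma> \<or> horizontal c2 \<sigma>"
  unfolding interval_seg_def horizontal_def by auto

lemma interval_seg_meets_horizontal:
  assumes "horizontal c \<sigma>" "interval_seg c1 c2 \<tau>" "seg_set \<sigma> \<inter> seg_set \<tau> \<noteq> {}"
  shows "horizontal c \<tau>"
proof -
  obtain m where "m \<in> seg_set \<sigma>" "m \<in> seg_set \<tau>"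
    using assms(3) by blast
  then show ?thesis
    using interval_seg_horizontal[OF assms(2)] horizontal_snd assms(1) by metis
qed

definition foot1 :: "real \<Rightarrow> seg \<Rightarrow> real" where
  "foot1 c1 \<sigma> = (if snd (fst \<sigma>) = c1 then fst (fst \<sigma>) else fst (snd \<sigma>))"

definition foot2 :: "real \<Rightarrow> seg \<Rightarrow> real" where
  "foot2 c1 \<sigma> = (if snd (fst \<sigma>) = c1 then fst (snd \<sigma>) else fst (fst \<sigma>))"

lemma perm_seg_set:
  "perm_seg c1 c2 \<sigma> \<Longrightarrow> c1 \<noteq> c2 \<Longrightarrow> seg_set \<sigma> = closed_segment (foot1 c1 \<sigma>, c1) (foot2 c1 \<sigma>, c2)"
  unfolding perm_seg_def seg_set_def foot1_def foot2_def
  by (cases \<sigma>) (auto simp: closed_segment_commute prod_eq_iff)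

text \<open>Horizontal offset of a point from the line through a permutation segment.\<close>

definition offset :: "real \<Rightarrow> real \<Rightarrow> seg \<Rightarrow> pt \<Rightarrow> real" where
  "offset c1 c2 \<sigma> m = fst m - foot1 c1 \<sigma> - (snd m - c1) * ((foot2 c1 \<sigma> - foot1 c1 \<sigma>) / (c2 - c1))"

lemma continuous_on_offset: "continuous_on S (offset c1 c2 \<sigma>)"
  unfolding offset_def by (intro continuous_intros)

lemma offset_eq_0_imp_in_perm_seg:
  assumes \<sigma>: "perm_seg c1 c2 \<sigma>" and c: "c1 \<noteq> c2" and m: "m \<in> strip c1 c2"
    and zero: "offset c1 c2 \<sigma> m = 0"
  shows "m \<in> seg_set \<sigma>"
proof -
  obtain u where u: "0 \<le> u" "u \<le> 1" and y: "snd m = (1 - u) * c1 + u * c2"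
    using m unfolding strip_def vimage_def mem_Collect_eq in_segment by auto
  have "snd m - c1 = u * (c2 - c1)"
    using y by (simp add: algebra_simps)
  then have "(snd m - c1) * ((foot2 c1 \<sigma> - foot1 c1 \<sigma>) / (c2 - c1)) = u * (foot2 c1 \<sigma> - foot1 c1 \<sigma>)"
    using c by simp
  then have "fst m = (1 - u) * foot1 c1 \<sigma> + u * foot2 c1 \<sigma>"
    using zero unfolding offset_def by (simp add: algebra_simps)
  then have "m = (1 - u) *\<^sub>R (foot1 c1 \<sigma>, c1) + u *\<^sub>R (foot2 c1 \<sigma>, c2)"
    using y by (simp add: prod_eq_iff)
  then show ?thesis
    unfolding perm_seg_set[OF \<sigma> c] in_segment using u by blast
qed

lemma offset_sign_const:
  assumes \<sigma>: "perm_seg c1 c2 \<sigma>" and c: "c1 \<noteq> c2"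
    and S: "connected S" "S \<subseteq> strip c1 c2" "S \<inter> seg_set \<sigma> = {}"
    and m: "m \<in> S" "m' \<in> S"
  shows "0 < offset c1 c2 \<sigma> m \<longleftrightarrow> 0 < offset c1 c2 \<sigma> m'"
  using S m offset_eq_0_imp_in_perm_seg[OF \<sigma> c]
  by (intro connected_sign_const[OF S(1) continuous_on_offset]) blast+

definition line_trace :: "real \<Rightarrow> seg \<Rightarrow> real set" where
  "line_trace c \<sigma> = {X. (X, c) \<in> seg_set \<sigma>}"

lemma connected_line_trace: "connected (line_trace c \<sigma>)"
proof (rule convex_connected)
  show "convex (line_trace c \<sigma>)"
    unfolding convex_def
  proof (intro ballI allI impI)
    fix X Y u v :: real
    assume "X \<in> line_trace c \<sigma>" "Y \<in> line_trace c \<sigma>" "0 \<le> u" "0 \<le> v" "u + v = 1"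
    then have "u *\<^sub>R (X, c) + v *\<^sub>R (Y, c) \<in> seg_set \<sigma>"
      using convex_closed_segment[of "fst \<sigma>" "snd \<sigma>", unfolded convex_def]
      unfolding line_trace_def seg_set_def by blast
    moreover have "u *\<^sub>R (X, c) + v *\<^sub>R (Y, c) = (u *\<^sub>R X + v *\<^sub>R Y, c)"
      using \<open>u + v = 1\<close> by (simp add: prod_eq_iff flip: distrib_right)
    ultimately show "u *\<^sub>R X + v *\<^sub>R Y \<in> line_trace c \<sigma>"
      unfolding line_trace_def by simp
  qed
qed

lemma horizontal_line_trace_ne: "horizontal c \<sigma> \<Longrightarrow> line_trace c \<sigma> \<noteq> {}"
  unfolding horizontal_def line_trace_def seg_set_def
  by (metis ends_in_segment(1) empty_iff mem_Collect_eq prod.collapse)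

lemma perm_line_trace_ne:
  "perm_seg c1 c2 \<sigma> \<Longrightarrow> c1 \<noteq> c2 \<Longrightarrow> c = c1 \<or> c = c2 \<Longrightarrow> line_trace c \<sigma> \<noteq> {}"
  unfolding line_trace_def by (auto simp: perm_seg_set)

lemma horizontal_meets_imp_line_trace_meets:
  assumes "horizontal c \<sigma>" "seg_set \<sigma> \<inter> seg_set \<tau> \<noteq> {}"
  shows "line_trace c \<sigma> \<inter> line_trace c \<tau> \<noteq> {}"
proof -
  obtain m where m: "m \<in> seg_set \<sigma>" "m \<in> seg_set \<tau>"
    using assms(2) by blast
  then have "m = (fst m, c)"
    using horizontal_snd[OF assms(1)] by (simp add: prod_eq_iff)
  then show ?thesis
    unfolding line_trace_def using m by (metis IntI empty_iff mem_Collect_eq)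
qed

lemma interval_segs_asteroid_free:
  assumes lines: "c1 \<noteq> c2"
    and ends: "interval_seg c1 c2 a \<or> perm_seg c1 c2 a" "interval_seg c1 c2 e \<or> perm_seg c1 c2 e"
    and intervals: "interval_seg c1 c2 b" "interval_seg c1 c2 c" "interval_seg c1 c2 d"
      "interval_seg c1 c2 w" "interval_seg c1 c2 z"
    and edges: "seg_set a \<inter> seg_set b \<noteq> {}" "seg_set b \<inter> seg_set c \<noteq> {}"
      "seg_set c \<inter> seg_set d \<noteq> {}" "seg_set d \<inter> seg_set e \<noteq> {}"
      "seg_set c \<inter> seg_set w \<noteq> {}" "seg_set w \<inter> seg_set z \<noteq> {}"
    and z_far: "seg_set z \<inter> (seg_set a \<union> seg_set b \<union> seg_set c \<union> seg_set d \<union> seg_set e) = {}"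
    and a_far: "seg_set a \<inter> (seg_set c \<union> seg_set d \<union> seg_set e \<union> seg_set w) = {}"
    and e_far: "seg_set e \<inter> (seg_set b \<union> seg_set c \<union> seg_set w) = {}"
  shows False
proof -
  obtain y where c: "horizontal y c" and y: "y = c1 \<or> y = c2"
    using interval_seg_horizontal[OF intervals(2)] by blast
  have b: "horizontal y b" and d: "horizontal y d" and w: "horizontal y w"
    using interval_seg_meets_horizontal[OF c] intervals(1,3,4) edges(2,3,5) by (auto simp: Int_commute)
  have z: "horizontal y z"
    using interval_seg_meets_horizontal[OF w intervals(5) edges(6)] .
  have "line_trace y a \<noteq> {}" "line_trace y e \<noteq> {}"
    using ends interval_seg_meets_horizontal[OF b] interval_seg_meets_horizontal[OF d] edges(1,4)
      horizontal_line_trace_ne perm_line_trace_ne[OF _ lines y] by (metis Int_commute)+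
  moreover have "line_trace y z \<noteq> {}"
    using horizontal_line_trace_ne[OF z] .
  ultimately obtain pa pe pz where p: "pa \<in> line_trace y a" "pe \<in> line_trace y e" "pz \<in> line_trace y z"
    by blast
  have meets: "line_trace y a \<inter> line_trace y b \<noteq> {}" "line_trace y b \<inter> line_trace y c \<noteq> {}" "line_trace y c \<inter> line_trace y d \<noteq> {}"
    "line_trace y d \<inter> line_trace y e \<noteq> {}" "line_trace y c \<inter> line_trace y w \<noteq> {}" "line_trace y w \<inter> line_trace y z \<noteq> {}"
    using horizontal_meets_imp_line_trace_meets b c d w edges by (metis Int_commute)+
  have "connected (line_trace y a \<union> line_trace y b \<union> line_trace y c \<union> line_trace y d \<union> line_trace y e)"
    by (rule connected_Un connected_line_trace | use meets in blast)+
  moreover have "connected (line_trace y e \<union> line_trace y d \<union> line_trace y c \<union> line_trace y w \<union> line_trace y z)"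
    by (rule connected_Un connected_line_trace | use meets in blast)+
  moreover have "connected (line_trace y a \<union> line_trace y b \<union> line_trace y c \<union> line_trace y w \<union> line_trace y z)"
    by (rule connected_Un connected_line_trace | use meets in blast)+
  moreover have "pz \<notin> line_trace y a \<union> line_trace y b \<union> line_trace y c \<union> line_trace y d \<union> line_trace y e"
    "pa \<notin> line_trace y e \<union> line_trace y d \<union> line_trace y c \<union> line_trace y w \<union> line_trace y z"
    "pe \<notin> line_trace y a \<union> line_trace y b \<union> line_trace y c \<union> line_trace y w \<union> line_trace y z"
    using p z_far a_far e_far unfolding line_trace_def by blast+
  ultimately show False
    using real_connected_no_asteroidal_triple p by blast
qed

lemma mod_neq_if_less_less_add:
  fixes a b n :: nat
  assumes "a < b" "b < a + n"
  shows "a mod n \<noteq> b mod n"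
proof
  assume "a mod n = b mod n"
  then have "n dvd b - a"
    using assms(1) mod_eq_dvd_iff_nat[of a b n] by simp
  then show False
    using assms nat_dvd_not_less[of "b - a" n] by simp
qed

definition Gn_block :: "nat \<Rightarrow> gvert set" where
  "Gn_block i = {Vv i, Wv i, Zv i}"

lemma Gn_block_verts: "0 < n \<Longrightarrow> x \<in> Gn_block (k mod n) \<Longrightarrow> x \<in> Gn_verts n"
  unfolding Gn_block_def Gn_verts_def by auto

lemma Gn_adj_sym: "Gn_adj n x y \<longleftrightarrow> Gn_adj n y x"
  unfolding Gn_adj_def by (auto simp: insert_commute)

lemma Gn_adj_Vv_Suc: "0 < n \<Longrightarrow> Gn_adj n (Vv (k mod n)) (Vv (Suc k mod n))"
  unfolding Gn_adj_def by (rule exI[of _ "k mod n"]) (simp add: mod_Suc_eq)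

lemma Gn_adj_Vv_Wv: "i < n \<Longrightarrow> Gn_adj n (Vv i) (Wv i)"
  and Gn_adj_Wv_Zv: "i < n \<Longrightarrow> Gn_adj n (Wv i) (Zv i)"
  unfolding Gn_adj_def by auto

lemma Gn_not_adj_Vv_Zv: "\<not> Gn_adj n (Vv a) (Zv b)"
  unfolding Gn_adj_def by (auto simp: doubleton_eq_iff)

lemma Gn_adj_blockD:
  assumes "x \<in> Gn_block p" "y \<in> Gn_block q" "x = y \<or> Gn_adj n x y"
  shows "p = q \<or> q = Suc p mod n \<or> p = Suc q mod n"
  using assms unfolding Gn_block_def Gn_adj_def by (auto simp: doubleton_eq_iff)

text \<open>Block indices are arbitrary naturals read modulo n; \<open>k + 2 \<le> m \<and> m + 2 \<le> k + n\<close>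
  says that the blocks of k and m are at cyclic distance at least 2.\<close>

lemma Gn_far_blocks_nonadj:
  assumes "x \<in> Gn_block (k mod n)" "y \<in> Gn_block (m mod n)" "k + 2 \<le> m" "m + 2 \<le> k + n"
  shows "x \<noteq> y \<and> \<not> Gn_adj n x y"
proof -
  have "k mod n \<noteq> m mod n" "Suc k mod n \<noteq> m mod n" "Suc m mod n \<noteq> (k + n) mod n"
    using assms(3,4) by (intro mod_neq_if_less_less_add; simp)+
  moreover have "k mod n = m mod n \<or> m mod n = Suc k mod n \<or> k mod n = Suc m mod n"
    if "x = y \<or> Gn_adj n x y"
    using Gn_adj_blockD[OF assms(1,2) that] by (simp add: mod_Suc_eq)
  ultimately show ?thesis
    by auto
qed

lemma cyclically_far_triple:
  fixes P :: "nat \<Rightarrow> bool"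
  assumes "9 \<le> n" and window: "\<And>b. P (b + 1) \<or> P (b + 2) \<or> P (b + 3)"
  obtains k1 k2 k3 where "P k1" "P k2" "P k3" "k1 + 2 \<le> k2" "k2 + 2 \<le> k3" "k3 + 2 \<le> k1 + n"
proof -
  obtain a where a: "P a"
    using window by blast
  obtain b where b: "P b" "a + 2 \<le> b" "b \<le> a + 4"
    using window[of "a + 1"] by force
  obtain c where c: "P c" "a + n - 4 \<le> c" "c \<le> a + n - 2"
    using window[of "a + n - 5"] assms(1) by (force simp: add.commute)
  show thesis
  proof (cases "b + 2 \<le> c")
    case True
    then show thesis
      using that a b c by simp
  next
    case False
    then have n: "n = 9" and bc: "b = a + 4" "c = a + 5"
      using b c assms(1) by auto
    obtain d where d: "P d" "a + 1 \<le> d" "d \<le> a + 3"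
      using window[of a] by force
    obtain e where e: "P e" "a + 6 \<le> e" "e \<le> a + 8"
      using window[of "a + 5"] by force
    consider "a + 2 \<le> d" | "e \<le> a + 7" | "d = a + 1" "e = a + 8"
      using d e bc n by linarith
    then show thesis
    proof cases
      case 1
      then show thesis
        using that[of a d c] a c d bc n by simp
    next
      case 2
      then show thesis
        using that[of a b e] a b e bc n by simp
    next
      case 3
      then show thesis
        using that[of d b e] b d e bc n by simp
    qed
  qed
qed

locale Gn_model =
  fixes c1 c2 :: real and n :: nat and s :: "gvert \<Rightarrow> seg"
  assumes lines_distinct: "c1 \<noteq> c2"
    and segs: "\<And>v. v \<in> Gn_verts n \<Longrightarrow> interval_seg c1 c2 (s v) \<or> perm_seg c1 c2 (s v)"
    and adj_iff_meet: "\<And>u v. u \<in> Gn_verts n \<Longrightarrow> v \<in> Gn_verts n \<Longrightarrow> u \<noteq> v \<Longrightarrow>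
       Gn_adj n u v \<longleftrightarrow> seg_set (s u) \<inter> seg_set (s v) \<noteq> {}"
begin

lemma far_blocks_disjoint:
  assumes "x \<in> Gn_block (k mod n)" "y \<in> Gn_block (m mod n)" "k + 2 \<le> m" "m + 2 \<le> k + n"
  shows "seg_set (s x) \<inter> seg_set (s y) = {}"
proof -
  have "0 < n"
    using assms(3,4) by simp
  then show ?thesis
    using Gn_far_blocks_nonadj[OF assms] adj_iff_meet Gn_block_verts assms(1,2) by blast
qed

definition region :: "nat \<Rightarrow> pt set" where
  "region k = (\<Union>v\<in>Gn_block (k mod n). seg_set (s v))"

lemma connected_region:
  assumes "0 < n"
  shows "connected (region k)"
proof -
  let ?V = "seg_set (s (Vv (k mod n)))" and ?W = "seg_set (s (Wv (k mod n)))"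
    and ?Z = "seg_set (s (Zv (k mod n)))"
  have verts: "Vv (k mod n) \<in> Gn_verts n" "Wv (k mod n) \<in> Gn_verts n" "Zv (k mod n) \<in> Gn_verts n"
    using Gn_block_verts[OF assms] by (simp_all add: Gn_block_def)
  have "?V \<inter> ?W \<noteq> {}" "?W \<inter> ?Z \<noteq> {}"
    using adj_iff_meet[OF verts(1,2)] adj_iff_meet[OF verts(2,3)] assms
      Gn_adj_Vv_Wv[of "k mod n" n] Gn_adj_Wv_Zv[of "k mod n" n] by simp_all
  then have "connected (?V \<union> ?W \<union> ?Z)"
    by (intro connected_Un connected_seg_set) auto
  moreover have "region k = ?V \<union> ?W \<union> ?Z"
    by (auto simp: region_def Gn_block_def)
  ultimately show ?thesis
    by simp
qed

lemma region_meets_Suc: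
  assumes "1 < n"
  shows "region k \<inter> region (Suc k) \<noteq> {}"
proof -
  have "Vv (k mod n) \<noteq> Vv (Suc k mod n)"
    using mod_neq_if_less_less_add[of k "Suc k" n] assms by simp
  moreover have "Vv (k mod n) \<in> Gn_verts n" "Vv (Suc k mod n) \<in> Gn_verts n"
    using Gn_block_verts assms by (simp_all add: Gn_block_def)
  ultimately have "seg_set (s (Vv (k mod n))) \<inter> seg_set (s (Vv (Suc k mod n))) \<noteq> {}"
    using adj_iff_meet Gn_adj_Vv_Suc[of n k] assms by simp
  then show ?thesis
    unfolding region_def Gn_block_def by blast
qed

lemma region_subset_strip: "0 < n \<Longrightarrow> region k \<subseteq> strip c1 c2"
  unfolding region_def using segs Gn_block_verts seg_set_subset_strip by blast

lemma far_regions_same_side: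
  assumes x: "x \<in> Gn_block (k mod n)" "perm_seg c1 c2 (s x)"
    and m: "k + 2 \<le> m" "m + 2 \<le> k + n" and m': "k + 2 \<le> m'" "m' + 2 \<le> k + n"
    and p: "p \<in> region m" "p' \<in> region m'"
  shows "0 < offset c1 c2 (s x) p \<longleftrightarrow> 0 < offset c1 c2 (s x) p'"
proof (rule offset_sign_const[OF x(2) lines_distinct])
  let ?R = "\<Union>j\<le>n - 4. region (k + 2 + j)"
  show "connected ?R"
    using m connected_region region_meets_Suc by (intro connected_UN_consecutive) auto
  show "?R \<subseteq> strip c1 c2"
    using m region_subset_strip by auto
  have "seg_set (s x) \<inter> seg_set (s v) = {}" if "j \<le> n - 4" "v \<in> Gn_block ((k + 2 + j) mod n)" for j v
    using far_blocks_disjoint[OF x(1) that(2)] that(1) m by simp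
  then show "?R \<inter> seg_set (s x) = {}"
    unfolding region_def by blast
  have "region i \<subseteq> ?R" if "k + 2 \<le> i" "i + 2 \<le> k + n" for i
  proof -
    have "i - (k + 2) \<in> {..n - 4}" "k + 2 + (i - (k + 2)) = i"
      using that by auto
    then show ?thesis
      by (metis UN_upper)
  qed
  then show "p \<in> ?R" "p' \<in> ?R"
    using p m m' by blast+
qed

lemma no_three_far_perm_blocks:
  assumes x: "x \<in> Gn_block (k1 mod n)" "perm_seg c1 c2 (s x)"
    and y: "y \<in> Gn_block (k2 mod n)" "perm_seg c1 c2 (s y)"
    and z: "z \<in> Gn_block (k3 mod n)" "perm_seg c1 c2 (s z)"
    and gaps: "k1 + 2 \<le> k2" "k2 + 2 \<le> k3" "k3 + 2 \<le> k1 + n"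
  shows False
proof -
  define f where "f v = foot1 c1 (s v)" for v
  have foot_in_seg: "(f v, c1) \<in> seg_set (s v)" if "perm_seg c1 c2 (s v)" for v
    using perm_seg_set[OF that lines_distinct] unfolding f_def by simp
  have same_side: "f u < f v \<longleftrightarrow> f u < f w"
    if "u \<in> Gn_block (i mod n)" "perm_seg c1 c2 (s u)"
      "v \<in> Gn_block (j mod n)" "perm_seg c1 c2 (s v)" "w \<in> Gn_block (l mod n)" "perm_seg c1 c2 (s w)"
      "i + 2 \<le> j" "j + 2 \<le> i + n" "i + 2 \<le> l" "l + 2 \<le> i + n" for u v w i j l
  proof -
    have "(f v, c1) \<in> region j" "(f w, c1) \<in> region l"
      using foot_in_seg that(3-6) unfolding region_def by blast+
    from far_regions_same_side[OF that(1,2,7,8,9,10) this] show ?thesis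
      by (simp add: offset_def f_def)
  qed
  have distinct_feet: "f u \<noteq> f v"
    if "u \<in> Gn_block (i mod n)" "perm_seg c1 c2 (s u)" "v \<in> Gn_block (j mod n)" "perm_seg c1 c2 (s v)"
      "i + 2 \<le> j" "j + 2 \<le> i + n" for u v i j
    using far_blocks_disjoint[OF that(1,3,5,6)] foot_in_seg[OF that(2)] foot_in_seg[OF that(4)] by auto
  have "f x < f y \<longleftrightarrow> f x < f z"
    using same_side[OF x y z] gaps by simp
  moreover have "f y < f x \<longleftrightarrow> f y < f z"
    using same_side[OF y, of x "k1 + n" z k3] x z gaps by simp
  moreover have "f z < f x \<longleftrightarrow> f z < f y"
    using same_side[OF z, of x "k1 + n" y "k2 + n"] x y gaps by simp
  moreover have "f x \<noteq> f y" "f y \<noteq> f z" "f x \<noteq> f z"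
    using distinct_feet[OF x y] distinct_feet[OF y z] distinct_feet[OF x z] gaps by simp_all
  ultimately show False
    by argo
qed

definition perm_block :: "nat \<Rightarrow> bool" where
  "perm_block k \<longleftrightarrow> (\<exists>x\<in>Gn_block (k mod n). perm_seg c1 c2 (s x))"

lemma perm_block_window:
  assumes "6 \<le> n"
  shows "perm_block (b + 1) \<or> perm_block (b + 2) \<or> perm_block (b + 3)"
proof (rule ccontr)
  assume none: "\<not> ?thesis"
  let ?v = "\<lambda>j. Vv ((b + j) mod n)" and ?w = "Wv ((b + 2) mod n)" and ?z = "Zv ((b + 2) mod n)"
  have n: "0 < n"
    using assms by simp
  have blocks: "?v j \<in> Gn_block ((b + j) mod n)" "?w \<in> Gn_block ((b + 2) mod n)"
    "?z \<in> Gn_block ((b + 2) mod n)" for j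
    by (simp_all add: Gn_block_def)
  have verts: "?v j \<in> Gn_verts n" "?w \<in> Gn_verts n" "?z \<in> Gn_verts n" for j
    using blocks Gn_block_verts n by blast+
  have interval: "interval_seg c1 c2 (s v)" if "v \<in> Gn_block ((b + j) mod n)" "j \<in> {1, 2, 3}" for v j
    using none segs[OF Gn_block_verts[OF n that(1)]] that unfolding perm_block_def by auto
  have path: "seg_set (s (?v j)) \<inter> seg_set (s (?v (Suc j))) \<noteq> {}" for j
  proof -
    have "?v j \<noteq> ?v (Suc j)"
      using mod_neq_if_less_less_add[of "b + j" "Suc (b + j)" n] assms by simp
    then show ?thesis
      using adj_iff_meet[OF verts(1)[of j] verts(1)[of "Suc j"]] Gn_adj_Vv_Suc[OF n, of "b + j"] by simp
  qed
  have pendant: "seg_set (s (?v 2)) \<inter> seg_set (s ?w) \<noteq> {}" "seg_set (s ?w) \<inter> seg_set (s ?z) \<noteq> {}"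
    using adj_iff_meet[OF verts(1)[of 2] verts(2)] adj_iff_meet[OF verts(2,3)] n
      Gn_adj_Vv_Wv[of "(b + 2) mod n" n] Gn_adj_Wv_Zv[of "(b + 2) mod n" n] by simp_all
  have z_far: "seg_set (s ?z) \<inter> seg_set (s (?v j)) = {}" for j
    using adj_iff_meet[OF verts(3,1)] Gn_not_adj_Vv_Zv Gn_adj_sym by blast
  have far: "seg_set (s x) \<inter> seg_set (s y) = {}"
    if "x \<in> Gn_block ((b + i) mod n)" "y \<in> Gn_block ((b + j) mod n)" "i + 2 \<le> j" "j \<le> i + 4" for x y i j
    using far_blocks_disjoint[OF that(1,2)] that(3,4) assms by simp
  show False
  proof (rule interval_segs_asteroid_free[OF lines_distinct segs[OF verts(1)] segs[OF verts(1)]])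
    show "interval_seg c1 c2 (s (?v 1))" "interval_seg c1 c2 (s (?v 2))" "interval_seg c1 c2 (s (?v 3))"
      "interval_seg c1 c2 (s ?w)" "interval_seg c1 c2 (s ?z)"
      using interval[OF blocks(1)[of 1]] interval[OF blocks(1)[of 2]] interval[OF blocks(1)[of 3]]
        interval[OF blocks(2)] interval[OF blocks(3)] by simp_all
    show "seg_set (s (?v 0)) \<inter> seg_set (s (?v 1)) \<noteq> {}" "seg_set (s (?v 1)) \<inter> seg_set (s (?v 2)) \<noteq> {}"
      "seg_set (s (?v 2)) \<inter> seg_set (s (?v 3)) \<noteq> {}" "seg_set (s (?v 3)) \<inter> seg_set (s (?v 4)) \<noteq> {}"
      using path[of 0] path[of 1] path[of 2] path[of 3] by (simp_all add: numeral_eq_Suc)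
    show "seg_set (s (?v 2)) \<inter> seg_set (s ?w) \<noteq> {}" "seg_set (s ?w) \<inter> seg_set (s ?z) \<noteq> {}"
      using pendant .
    show "seg_set (s ?z) \<inter> (seg_set (s (?v 0)) \<union> seg_set (s (?v 1)) \<union> seg_set (s (?v 2))
        \<union> seg_set (s (?v 3)) \<union> seg_set (s (?v 4))) = {}"
      using z_far by blast
    show "seg_set (s (?v 0)) \<inter> (seg_set (s (?v 2)) \<union> seg_set (s (?v 3)) \<union> seg_set (s (?v 4))
        \<union> seg_set (s ?w)) = {}"
      using far[OF blocks(1)[of 0] blocks(1)[of 2]] far[OF blocks(1)[of 0] blocks(1)[of 3]]
        far[OF blocks(1)[of 0] blocks(1)[of 4]] far[OF blocks(1)[of 0] blocks(2)] by auto
    show "seg_set (s (?v 4)) \<inter> (seg_set (s (?v 1)) \<union> seg_set (s (?v 2)) \<union> seg_set (s ?w)) = {}"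
      using far[OF blocks(1)[of 1] blocks(1)[of 4]] far[OF blocks(1)[of 2] blocks(1)[of 4]]
        far[OF blocks(2) blocks(1)[of 4]] by (auto simp: Int_commute)
  qed
qed

end

theorem mainTheorem10:
  fixes c1 c2 :: real and n :: nat
  assumes "c1 \<noteq> c2" and "n \<ge> 9"
  shows "\<not> IP_SEG_graph c1 c2 (Gn_verts n) (Gn_adj n)"
proof
  assume "IP_SEG_graph c1 c2 (Gn_verts n) (Gn_adj n)"
  then obtain s where "Gn_model c1 c2 n s"
    using assms(1) unfolding IP_SEG_graph_def Gn_model_def by metis
  then interpret Gn_model c1 c2 n s .
  obtain k1 k2 k3 where "perm_block k1" "perm_block k2" "perm_block k3"
    and "k1 + 2 \<le> k2" "k2 + 2 \<le> k3" "k3 + 2 \<le> k1 + n"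
    using cyclically_far_triple[OF assms(2) perm_block_window] assms(2) by auto
  then show False
    unfolding perm_block_def using no_three_far_perm_blocks by blast
qed

end
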